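(* The invariant $\bar\gamma_2$ is a finite type invariant of degree one, in the following sense: if $K$ is an oriented virtual knot diagram and $K'$ is obtained from $K$ by switching exactly one classical crossing, then $\bar\gamma_2(K)=(-1)^1\bar\gamma_2(K')$, i.e. (coefficients being modulo $2$) $\bar\gamma_2(K)=\bar\gamma_2(K')$.
   Context: For an oriented virtual knot diagram $K$ and a classical crossing $c$ with sign $sgn(c)\in\{\pm1\}$, let $K_c$ be the two-component oriented virtual link diagram obtained by smoothing $c$ in the orientation-respecting way. Let $L(K_c)$ be the sum of the signs of all classical crossings of $K_c$ at which the two strands belong to different components, and $\bar L(K_c)=L(K_c)\bmod 2$. Define $\gamma(K)=\sum_{c} t^{\bar L(K_c)}\,sgn(c)$, summing over all classical crossings. In the chord (Gauss) diagram of $K$, each classical crossing is a chord; a chord has odd parity if it intersects an odd number of other chords, and even parity otherwise. Let $P$ be the set of unordered pairs $p$ of intersecting chords of opposite parity, and for $p\in P$ let $K_p$ be the diagram obtained by smoothing both crossings of $p$ in the orientation-respecting way. Define $\bar\gamma_2(K)=\sum_{p\in P}t^2\gamma(K_p)$ with coefficients reduced modulo $2$. The paper's notion of degree: for a set $S$ of classical crossings of a diagram $D$, $D_S$ denotes $D$ with all crossings in $S$ switched; an invariant $v$ has degree $n$ if $v(D)=(-1)^{|S|}v(D_S)$ whenever $|S|=n$. *)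

theory Defs
  imports "HOL-Computational_Algebra.Polynomial"
begin

text \<open>An oriented virtual knot diagram is encoded by its Gauss (chord) diagram:
  a word listing, in order along the oriented knot starting at some base point,
  the passages through classical crossings as pairs (crossing label, passing over?),
  together with a sign function on the crossing labels.  Every chord diagram with
  these data is realized by a virtual knot diagram.\<close>

type_synonym gauss_diagram = "(nat \<times> bool) list \<times> (nat \<Rightarrow> int)"

definition chords :: "(nat \<times> bool) list \<Rightarrow> nat set" where
  "chords w = fst ` set w"

definition occ :: "(nat \<times> bool) list \<Rightarrow> nat \<Rightarrow> nat set" where
  "occ w c = {i. i < length w \<and> fst (w ! i) = c}"

definition wf_gauss :: "gauss_diagram \<Rightarrow> bool" where
  "wf_gauss K \<longleftrightarrow> (\<forall>c \<in> chords (fst K).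
      card {i. i < length (fst K) \<and> fst K ! i = (c, True)} = 1 \<and>
      card {i. i < length (fst K) \<and> fst K ! i = (c, False)} = 1 \<and>
      (snd K c = 1 \<or> snd K c = -1))"

definition fstpos :: "(nat \<times> bool) list \<Rightarrow> nat \<Rightarrow> nat" where
  "fstpos w c = Min (occ w c)"

definition sndpos :: "(nat \<times> bool) list \<Rightarrow> nat \<Rightarrow> nat" where
  "sndpos w c = Max (occ w c)"

text \<open>Position i lies on the component of K_c formed by the arc strictly between
  the two passages through c.\<close>
definition inside :: "(nat \<times> bool) list \<Rightarrow> nat \<Rightarrow> nat \<Rightarrow> bool" where
  "inside w c i \<longleftrightarrow> fstpos w c < i \<and> i < sndpos w c"

text \<open>Crossing d of K_c has its two strands on different components.\<close>
definition inter_comp :: "(nat \<times> bool) list \<Rightarrow> nat \<Rightarrow> nat \<Rightarrow> bool" where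
  "inter_comp w c d \<longleftrightarrow> inside w c (fstpos w d) \<noteq> inside w c (sndpos w d)"

definition link_smooth :: "gauss_diagram \<Rightarrow> nat \<Rightarrow> int" where
  "link_smooth K c = (\<Sum>d \<in> {d \<in> chords (fst K) - {c}. inter_comp (fst K) c d}. snd K d)"

definition gamma :: "gauss_diagram \<Rightarrow> int poly" where
  "gamma K = (\<Sum>c \<in> chords (fst K). monom (snd K c) (nat (link_smooth K c mod 2)))"

definition intersect :: "(nat \<times> bool) list \<Rightarrow> nat \<Rightarrow> nat \<Rightarrow> bool" where
  "intersect w c d \<longleftrightarrow> c \<in> chords w \<and> d \<in> chords w \<and> c \<noteq> d \<and>
     inside w c (fstpos w d) \<noteq> inside w c (sndpos w d)"

definition odd_chord :: "(nat \<times> bool) list \<Rightarrow> nat \<Rightarrow> bool" where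
  "odd_chord w c \<longleftrightarrow> odd (card {d. intersect w c d})"

definition opp_pairs :: "(nat \<times> bool) list \<Rightarrow> nat set set" where
  "opp_pairs w = {{c, d} | c d. intersect w c d \<and> odd_chord w c \<noteq> odd_chord w d}"

definition seg :: "'a list \<Rightarrow> nat \<Rightarrow> nat \<Rightarrow> 'a list" where
  "seg w i j = take (j - i) (drop i w)"

text \<open>Orientation-respecting smoothing of two intersecting chords.  If the four
  endpoints are at positions p<q<r<s (p,r one chord, q,s the other) and the word
  is X0 p A q B r C s X1, the resulting knot reads A (X1 X0) C B cyclically.\<close>
definition smooth_pair_word :: "(nat \<times> bool) list \<Rightarrow> nat set \<Rightarrow> (nat \<times> bool) list" where
  "smooth_pair_word w S = (let ps = sorted_list_of_set (\<Union>c \<in> S. occ w c);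
       p = ps ! 0; q = ps ! 1; r = ps ! 2; s = ps ! 3 in
     seg w (p+1) q @ seg w (s+1) (length w) @ seg w 0 p @ seg w (r+1) s @ seg w (q+1) r)"

definition smooth_pair :: "gauss_diagram \<Rightarrow> nat set \<Rightarrow> gauss_diagram" where
  "smooth_pair K S = (smooth_pair_word (fst K) S, snd K)"

definition mod2_poly :: "int poly \<Rightarrow> int poly" where
  "mod2_poly f = map_poly (\<lambda>x. x mod 2) f"

definition gamma2bar :: "gauss_diagram \<Rightarrow> int poly" where
  "gamma2bar K = mod2_poly (\<Sum>p \<in> opp_pairs (fst K). monom 1 2 * gamma (smooth_pair K p))"

definition switch :: "gauss_diagram \<Rightarrow> nat \<Rightarrow> gauss_diagram" where
  "switch K c = (map (\<lambda>(a, b). if a = c then (a, \<not> b) else (a, b)) (fst K),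
                 (snd K)(c := - snd K c))"

end

theory Submission
  imports Defs
begin

text \<open>Switching a crossing only exchanges over and under at its two passages and negates
  its sign.  Everything entering \<open>gamma2bar\<close> -- the chords, their intersections and
  parities, the pair smoothings and the linking numbers of the smoothings -- depends on the
  Gauss word only through its sequence of crossing labels, and on the signs only modulo 2,
  which is all that survives the final reduction of coefficients.\<close>

lemma mod2_poly_eqI:
  assumes "[:2:] dvd f - g"
  shows "mod2_poly f = mod2_poly g"
proof (rule poly_eqI)
  fix n
  have "2 dvd coeff f n - coeff g n"
    using assms by (simp add: const_poly_dvd_iff)
  then show "coeff (mod2_poly f) n = coeff (mod2_poly g) n"
    by (simp add: mod2_poly_def coeff_map_poly mod_eq_dvd_iff)
qed

lemma mod2_poly_idem: "mod2_poly (mod2_poly f) = mod2_poly f"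
  unfolding mod2_poly_def by (intro poly_eqI) (simp add: coeff_map_poly)

lemma mod2_poly_uminus: "mod2_poly (- f) = mod2_poly f"
  unfolding mod2_poly_def by (intro poly_eqI) (simp add: coeff_map_poly zmod_zminus1_eq_if)

lemma dvd_sum_diff:
  fixes d :: "'a::comm_ring_1"
  assumes "\<And>x. x \<in> A \<Longrightarrow> d dvd f x - g x"
  shows "d dvd sum f A - sum g A"
  using dvd_sum[of A d "\<lambda>x. f x - g x"] assms by (simp add: sum_subtractf)

lemma occ_conv_map_fst: "occ w c = {i. i < length (map fst w) \<and> map fst w ! i = c}"
  unfolding occ_def by auto

lemma chords_conv_map_fst: "chords w = set (map fst w)"
  unfolding chords_def by simp

lemma occ_eq_if_labels_eq: "map fst w1 = map fst w2 \<Longrightarrow> occ w1 = occ w2"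
  by (rule ext) (simp only: occ_conv_map_fst)

lemma chords_eq_if_labels_eq: "map fst w1 = map fst w2 \<Longrightarrow> chords w1 = chords w2"
  by (simp only: chords_conv_map_fst)

lemma intersect_eq_if_labels_eq:
  assumes "map fst w1 = map fst w2"
  shows "intersect w1 = intersect w2"
  unfolding intersect_def[abs_def] inside_def fstpos_def sndpos_def
    occ_eq_if_labels_eq[OF assms] chords_eq_if_labels_eq[OF assms] ..

lemma inter_comp_eq_if_labels_eq:
  assumes "map fst w1 = map fst w2"
  shows "inter_comp w1 = inter_comp w2"
  unfolding inter_comp_def[abs_def] inside_def fstpos_def sndpos_def
    occ_eq_if_labels_eq[OF assms] ..

lemma opp_pairs_eq_if_labels_eq:
  assumes "map fst w1 = map fst w2"
  shows "opp_pairs w1 = opp_pairs w2"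
  unfolding opp_pairs_def odd_chord_def intersect_eq_if_labels_eq[OF assms] ..

lemma map_fst_seg: "map fst (seg w i j) = seg (map fst w) i j"
  unfolding seg_def by (simp add: take_map drop_map)

lemma labels_smooth_pair_word:
  assumes "map fst w1 = map fst w2"
  shows "map fst (smooth_pair_word w1 S) = map fst (smooth_pair_word w2 S)"
proof -
  have "length w1 = length w2"
    using assms by (metis length_map)
  then show ?thesis
    unfolding smooth_pair_word_def Let_def
    by (simp add: occ_eq_if_labels_eq[OF assms] map_fst_seg assms)
qed

lemma link_smooth_mod2_cong:
  assumes "map fst w1 = map fst w2" and "\<And>d. s1 d mod 2 = s2 d mod 2"
  shows "link_smooth (w1, s1) c mod 2 = link_smooth (w2, s2) c mod 2"
proof -
  let ?A = "{d \<in> chords w2 - {c}. inter_comp w2 c d}"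
  have "sum s1 ?A mod 2 = (\<Sum>d\<in>?A. s1 d mod 2) mod 2"
    by (simp add: mod_sum_eq)
  also have "\<dots> = sum s2 ?A mod 2"
    by (simp add: assms(2) mod_sum_eq)
  finally show ?thesis
    unfolding link_smooth_def
    by (simp add: chords_eq_if_labels_eq[OF assms(1)] inter_comp_eq_if_labels_eq[OF assms(1)])
qed

lemma gamma_mod2_cong:
  assumes "map fst w1 = map fst w2" and "\<And>d. s1 d mod 2 = s2 d mod 2"
  shows "[:2:] dvd gamma (w1, s1) - gamma (w2, s2)"
  unfolding gamma_def fst_conv snd_conv chords_eq_if_labels_eq[OF assms(1)]
proof (rule dvd_sum_diff)
  fix c
  have "2 dvd s1 c - s2 c"
    using assms(2) by (simp add: mod_eq_dvd_iff)
  then show "[:2:] dvd monom (s1 c) (nat (link_smooth (w1, s1) c mod 2))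
                      - monom (s2 c) (nat (link_smooth (w2, s2) c mod 2))"
    by (simp add: link_smooth_mod2_cong[OF assms] diff_monom const_poly_dvd_iff coeff_monom)
qed

lemma gamma2bar_mod2_cong:
  assumes "map fst w1 = map fst w2" and "\<And>d. s1 d mod 2 = s2 d mod 2"
  shows "gamma2bar (w1, s1) = gamma2bar (w2, s2)"
  unfolding gamma2bar_def fst_conv opp_pairs_eq_if_labels_eq[OF assms(1)]
proof (rule mod2_poly_eqI, rule dvd_sum_diff)
  fix p
  have "[:2:] dvd gamma (smooth_pair (w1, s1) p) - gamma (smooth_pair (w2, s2) p)"
    unfolding smooth_pair_def fst_conv snd_conv
    by (rule gamma_mod2_cong[OF labels_smooth_pair_word[OF assms(1)] assms(2)])
  then show "[:2:] dvd monom 1 2 * gamma (smooth_pair (w1, s1) p)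
                      - monom 1 2 * gamma (smooth_pair (w2, s2) p)"
    by (simp add: dvd_mult right_diff_distrib[symmetric])
qed

lemma gamma2bar_switch: "gamma2bar (switch K c) = gamma2bar K"
proof -
  obtain w s where K: "K = (w, s)"
    by (cases K)
  have "map fst (map (\<lambda>(a, b). if a = c then (a, \<not> b) else (a, b)) w) = map fst w"
    by (induction w) auto
  moreover have "(s(c := - s c)) d mod 2 = s d mod 2" for d
    by (simp add: minus_mod_self2 zmod_zminus1_eq_if)
  ultimately show ?thesis
    unfolding K switch_def fst_conv snd_conv by (rule gamma2bar_mod2_cong)
qed

theorem mainTheorem7:
  fixes K :: gauss_diagram and c :: nat
  assumes "wf_gauss K" and "c \<in> chords (fst K)"
  shows "gamma2bar K = mod2_poly (smult ((-1) ^ 1) (gamma2bar (switch K c)))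
       \<and> gamma2bar K = gamma2bar (switch K c)"
proof -
  have "mod2_poly (smult ((-1) ^ 1) (gamma2bar (switch K c))) = gamma2bar (switch K c)"
    by (simp add: mod2_poly_uminus gamma2bar_def mod2_poly_idem)
  then show ?thesis
    by (simp add: gamma2bar_switch)
qed

end
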